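(* Let $p$ be a prime, $e\ge1$, and $G$ a finite abelian group of order $p^e$. Let $\psi^p\colon\mathbf{Z}[G]\to\mathbf{Z}[G]$ be the ring homomorphism with $\psi^p(g)=g^p$ for $g\in G$. If $\rho$ is a representation of level $k>0$ and there is no representation $\tau$ with $\psi\tau=\rho$, then $\psi^p(b_\rho)=0$.
   Context: A representation is a group homomorphism $\rho\colon G\to\mathbf{C}^*$; its level is $k$ if $\rho(G)$ has $p^k$ elements. For a representation $\tau$, $\psi\tau$ is the representation $x\mapsto\tau(x^p)$. Write $\omega=\exp(2\pi i/p)$. For $\rho$ of level $k>0$ set $b_\rho=\sum_{x\in G,\ \rho(x)=1}x-\sum_{\xi\in G,\ \rho(\xi)=\omega}\xi\in\mathbf{Z}[G]$. *)

theory Defs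
  imports "HOL-Algebra.Coset" "HOL-Computational_Algebra.Primes" Complex_Main
begin

definition is_rep :: "('a, 'b) monoid_scheme \<Rightarrow> ('a \<Rightarrow> complex) \<Rightarrow> bool" where
  "is_rep G \<rho> \<longleftrightarrow> (\<forall>x\<in>carrier G. \<rho> x \<noteq> 0) \<and>
     (\<forall>x\<in>carrier G. \<forall>y\<in>carrier G. \<rho> (x \<otimes>\<^bsub>G\<^esub> y) = \<rho> x * \<rho> y)"

definition rep_level :: "('a, 'b) monoid_scheme \<Rightarrow> nat \<Rightarrow> ('a \<Rightarrow> complex) \<Rightarrow> nat \<Rightarrow> bool" where
  "rep_level G p \<rho> k \<longleftrightarrow> card (\<rho> ` carrier G) = p ^ k"

definition rep_psi :: "('a, 'b) monoid_scheme \<Rightarrow> nat \<Rightarrow> ('a \<Rightarrow> complex) \<Rightarrow> ('a \<Rightarrow> complex)" where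
  "rep_psi G p \<tau> = (\<lambda>x. \<tau> (x [^]\<^bsub>G\<^esub> p))"

text \<open>Elements of the integral group ring Z[G] of a finite group G are represented
as functions a :: 'a \<Rightarrow> int (coefficient of each group element) supported on carrier G;
the group element g corresponds to the indicator of g.\<close>
definition grp_ring_elem :: "('a, 'b) monoid_scheme \<Rightarrow> ('a \<Rightarrow> int) \<Rightarrow> bool" where
  "grp_ring_elem G a \<longleftrightarrow> (\<forall>x. x \<notin> carrier G \<longrightarrow> a x = 0)"

text \<open>psi^p on Z[G]: the additive (Z-linear) extension of g \<mapsto> g^p, i.e.
  psi^p(\<Sum>_x a_x x) = \<Sum>_x a_x x^p; the coefficient of y is the sum of a_x over x with x^p = y.\<close>
definition psi_ring :: "('a, 'b) monoid_scheme \<Rightarrow> nat \<Rightarrow> ('a \<Rightarrow> int) \<Rightarrow> ('a \<Rightarrow> int)" where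
  "psi_ring G p a = (\<lambda>y. if y \<in> carrier G
      then (\<Sum>x\<in>{x\<in>carrier G. x [^]\<^bsub>G\<^esub> p = y}. a x) else 0)"

definition b_elem :: "('a, 'b) monoid_scheme \<Rightarrow> nat \<Rightarrow> ('a \<Rightarrow> complex) \<Rightarrow> ('a \<Rightarrow> int)" where
  "b_elem G p \<rho> = (\<lambda>x.
      (if x \<in> carrier G \<and> \<rho> x = 1 then 1 else 0)
    - (if x \<in> carrier G \<and> \<rho> x = exp (2 * pi * \<i> / of_nat p) then 1 else 0))"

end

theory Submission
  imports Defs "HOL-Algebra.Multiplicative_Group"
begin

text \<open>
  If \<open>\<rho>\<close> were trivial on the \<open>p\<close>-torsion of \<open>G\<close>, then \<open>\<chi>(x\<^sup>p) := \<rho>(x)\<close> would be a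
  well-defined character of the subgroup \<open>G\<^sup>p\<close>; since characters of subgroups of a finite
  abelian group extend to the whole group (adjoin one element at a time, using that every
  nonzero complex number has an \<open>m\<close>-th root), this would give \<open>\<tau>\<close> with \<open>\<psi>\<tau> = \<rho>\<close>.
  Hence some \<open>z\<close> with \<open>z\<^sup>p = 1\<close> has \<open>\<rho>(z) \<noteq> 1\<close>, a primitive \<open>p\<close>-th root of unity, and a
  power \<open>w\<close> of \<open>z\<close> satisfies \<open>\<rho>(w) = \<omega>\<close>. Multiplication by \<open>w\<close> preserves each fibre of
  \<open>x \<mapsto> x\<^sup>p\<close> and maps \<open>{\<rho> = 1}\<close> bijectively onto \<open>{\<rho> = \<omega>}\<close>, so every coefficient
  of \<open>\<psi>\<^sup>p(b\<^sub>\<rho>)\<close> vanishes.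
\<close>

lemma exists_complex_root:
  assumes "(w::complex) \<noteq> 0" "n > 0" shows "\<exists>c. c ^ n = w"
proof -
  obtain f where f: "f ` {z::complex. z ^ n = 1} = {z. z ^ n = w}"
    using bij_betw_nth_root_unity[OF assms] unfolding bij_betw_def by blast
  have "f 1 \<in> f ` {z::complex. z ^ n = 1}" by simp
  then show ?thesis using f by auto
qed

lemma exp_2pi_i_div_pow: "exp (2 * pi * \<i> / of_nat p) ^ k = cis (2 * pi * real k / real p)"
proof -
  have "exp (2 * pi * \<i> / of_nat p) ^ k = exp (of_nat k * (2 * pi * \<i> / of_nat p))"
    by (metis exp_of_nat_mult)
  also have "\<dots> = cis (2 * pi * real k / real p)" by (simp add: cis_conv_exp mult_ac)
  finally show ?thesis .
qed

lemma prime_root_of_unity_pow_eq: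
  fixes \<zeta> :: complex
  assumes p: "prime p" and \<zeta>: "\<zeta> ^ p = 1" "\<zeta> \<noteq> 1"
  obtains t :: nat where "\<zeta> ^ t = exp (2 * pi * \<i> / of_nat p)"
proof -
  define \<omega> :: complex where "\<omega> = exp (2 * pi * \<i> / of_nat p)"
  have "\<zeta> \<in> (\<lambda>k. cis (2 * pi * real k / real p)) ` {..<p}"
    using bij_betw_roots_unity[of p] prime_gt_0_nat[OF p] \<zeta>(1) unfolding bij_betw_def by auto
  then obtain j where j: "j < p" "\<zeta> = \<omega> ^ j" unfolding \<omega>_def exp_2pi_i_div_pow by blast
  have "j \<noteq> 0" using j \<zeta>(2) by (metis power_0)
  then have "coprime p j" using p j by (intro prime_imp_coprime) (auto dest: dvd_imp_le)
  then obtain t q where tq: "j * t = p * q + 1"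
    using bezout_nat[OF \<open>j \<noteq> 0\<close>, of p] by (auto simp: coprime_commute coprime_iff_gcd_eq_1)
  have "\<omega> ^ p = 1" unfolding \<omega>_def exp_2pi_i_div_pow using prime_gt_0_nat[OF p] by simp
  then have "\<zeta> ^ t = \<omega>" unfolding j(2) power_mult[symmetric] tq by (simp add: power_add power_mult)
  then show ?thesis using that unfolding \<omega>_def by blast
qed

lemma (in monoid) is_rep_one:
  assumes "is_rep G \<rho>" shows "\<rho> \<one> = 1"
proof -
  have "\<rho> \<one> = \<rho> \<one> * \<rho> \<one>" using assms unfolding is_rep_def by (metis one_closed l_one)
  then show ?thesis using assms unfolding is_rep_def by auto
qed

lemma (in monoid) is_rep_pow:
  assumes "is_rep G \<rho>" "x \<in> carrier G" shows "\<rho> (x [^] (n::nat)) = \<rho> x ^ n"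
  using assms by (induction n) (auto simp: is_rep_one is_rep_def mult.commute)

lemma (in group) is_rep_inv:
  assumes "is_rep G \<rho>" "x \<in> carrier G" shows "\<rho> (inv x) = inverse (\<rho> x)"
proof -
  have "\<rho> x * \<rho> (inv x) = 1"
    using assms is_rep_one[OF assms(1)] unfolding is_rep_def by (metis inv_closed r_inv)
  then show ?thesis by (rule inverse_unique[symmetric])
qed

lemma (in group) subgroup_nat_pow_closed:
  assumes "subgroup H G" "x \<in> H" shows "x [^] (n::nat) \<in> H"
  using assms by (induction n) (auto simp: subgroup.one_closed subgroup.m_closed)

lemma (in group) is_rep_subgroup_pow:
  assumes "subgroup H G" "is_rep (G\<lparr>carrier := H\<rparr>) \<chi>" "x \<in> H"
  shows "\<chi> (x [^] (n::nat)) = \<chi> x ^ n"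
  using monoid.is_rep_pow[OF group.is_monoid[OF subgroup.subgroup_is_group[OF assms(1) is_group]]]
    assms(2,3) by (simp add: nat_pow_consistent[symmetric])

context comm_group
begin

lemma exists_root_along_powers:
  assumes H: "subgroup H G" and \<chi>: "is_rep (G\<lparr>carrier := H\<rparr>) \<chi>" and g: "g \<in> carrier G"
    and fin: "finite (carrier G)"
  obtains c where "\<And>n::nat. g [^] n \<in> H \<Longrightarrow> \<chi> (g [^] n) = c ^ n"
proof -
  have "g [^] order G \<in> H" "order G > 0"
    using pow_order_eq_1[OF g] subgroup.one_closed[OF H] fin by (auto simp: order_gt_0_iff_finite)
  then have ex: "\<exists>m::nat. 0 < m \<and> g [^] m \<in> H" by auto
  define m where "m = (LEAST m::nat. 0 < m \<and> g [^] m \<in> H)"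
  have m: "0 < m" "g [^] m \<in> H" using LeastI_ex[OF ex] unfolding m_def by auto
  have m_dvd: "m dvd n" if "g [^] n \<in> H" for n
  proof -
    have "g [^] n = g [^] (m * (n div m) + n mod m)" by simp
    also have "\<dots> = (g [^] m) [^] (n div m) \<otimes> g [^] (n mod m)"
      using g by (simp add: nat_pow_mult nat_pow_pow)
    finally have "g [^] (n mod m) = inv ((g [^] m) [^] (n div m)) \<otimes> g [^] n"
      using inv_solve_left[of "g [^] (n mod m)" "(g [^] m) [^] (n div m)" "g [^] n"] g by simp
    also have "\<dots> \<in> H"
      by (intro subgroup.m_closed[OF H] subgroup.m_inv_closed[OF H]
          subgroup_nat_pow_closed[OF H m(2)] that)
    finally have "g [^] (n mod m) \<in> H" .
    then have "n mod m = 0"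
      using not_less_Least[of "n mod m" "\<lambda>m::nat. 0 < m \<and> g [^] m \<in> H"] m(1) unfolding m_def[symmetric]
      by auto
    then show ?thesis by auto
  qed
  have "\<chi> (g [^] m) \<noteq> 0" using \<chi> m(2) unfolding is_rep_def by simp
  then obtain c where c: "c ^ m = \<chi> (g [^] m)" using exists_complex_root m(1) by blast
  show ?thesis
  proof (rule that)
    fix n :: nat assume "g [^] n \<in> H"
    then obtain q where q: "n = m * q" using m_dvd by blast
    have "\<chi> (g [^] n) = \<chi> ((g [^] m) [^] q)" using g by (simp add: q nat_pow_pow)
    also have "\<dots> = c ^ n" using is_rep_subgroup_pow[OF H \<chi> m(2)] by (simp add: c q power_mult)
    finally show "\<chi> (g [^] n) = c ^ n" .
  qed
qed

lemma set_mult_generate_singleton: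
  assumes "finite (carrier G)" "g \<in> carrier G"
  shows "H <#> generate G {g} = {h \<otimes> g [^] (n::nat) | h n. h \<in> H}"
  unfolding set_mult_def generate_pow_on_finite_carrier[OF assms] by auto

lemma is_rep_adjoin_well_defined:
  assumes H: "subgroup H G" and \<chi>: "is_rep (G\<lparr>carrier := H\<rparr>) \<chi>" and g: "g \<in> carrier G"
    and c: "\<And>n::nat. g [^] n \<in> H \<Longrightarrow> \<chi> (g [^] n) = c ^ n"
    and h: "h \<in> H" "h' \<in> H" and eq: "h \<otimes> g [^] n = h' \<otimes> g [^] (n'::nat)"
  shows "\<chi> h * c ^ n = \<chi> h' * c ^ n'"
proof -
  have le: "\<chi> h * c ^ n = \<chi> h' * c ^ n'"
    if h: "h \<in> H" "h' \<in> H" and eq: "h \<otimes> g [^] n = h' \<otimes> g [^] n'" and "n' \<le> n"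
    for h h' and n n' :: nat
  proof -
    obtain d where d: "n = n' + d" using \<open>n' \<le> n\<close> le_Suc_ex by blast
    have hG: "h \<in> carrier G" "h' \<in> carrier G" using h subgroup.mem_carrier[OF H] by auto
    have "(h \<otimes> g [^] d) \<otimes> g [^] n' = h' \<otimes> g [^] n'"
      using eq hG g by (simp add: d m_assoc nat_pow_mult[symmetric] add.commute)
    then have hd: "h \<otimes> g [^] d = h'" using hG g by (simp add: right_cancel)
    then have "g [^] d = inv h \<otimes> h'" using hG g by (simp add: inv_solve_left)
    then have "g [^] d \<in> H" using H h by (simp add: subgroup.m_closed subgroup.m_inv_closed)
    then have "\<chi> h' = \<chi> h * c ^ d" using \<chi> h c unfolding is_rep_def hd[symmetric] by simp
    then show ?thesis by (simp add: d power_add)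
  qed
  show ?thesis using le[OF h eq] le[OF h(2,1) eq[symmetric]] by (cases "n' \<le> n") auto
qed

lemma is_rep_extend_adjoin:
  assumes H: "subgroup H G" and \<chi>: "is_rep (G\<lparr>carrier := H\<rparr>) \<chi>" and g: "g \<in> carrier G"
    and fin: "finite (carrier G)"
  obtains \<chi>' where "is_rep (G\<lparr>carrier := H <#> generate G {g}\<rparr>) \<chi>'" "\<And>h. h \<in> H \<Longrightarrow> \<chi>' h = \<chi> h"
proof -
  obtain c where c: "\<And>n::nat. g [^] n \<in> H \<Longrightarrow> \<chi> (g [^] n) = c ^ n"
    using exists_root_along_powers[OF H \<chi> g fin] by blast
  have "c ^ order G = 1"
    using c[of "order G"] pow_order_eq_1[OF g] subgroup.one_closed[OF H]
      monoid.is_rep_one[OF group.is_monoid[OF subgroup.subgroup_is_group[OF H is_group]] \<chi>]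
    by simp
  then have c0: "c \<noteq> 0" using fin by (metis order_gt_0_iff_finite zero_neq_one zero_power)
  define \<chi>' where "\<chi>' x = (SOME v. \<exists>h\<in>H. \<exists>n::nat. x = h \<otimes> g [^] n \<and> v = \<chi> h * c ^ n)" for x
  have \<chi>'_eq: "\<chi>' (h \<otimes> g [^] n) = \<chi> h * c ^ n" if "h \<in> H" for h n
  proof -
    have "\<exists>h'\<in>H. \<exists>n'::nat. h \<otimes> g [^] n = h' \<otimes> g [^] n' \<and> \<chi>' (h \<otimes> g [^] n) = \<chi> h' * c ^ n'"
      unfolding \<chi>'_def by (rule someI_ex) (use that in blast)
    then show ?thesis using is_rep_adjoin_well_defined[OF H \<chi> g c that] by metis
  qed
  have mult: "(h \<otimes> g [^] n) \<otimes> (h' \<otimes> g [^] n') = (h \<otimes> h') \<otimes> g [^] (n + n')"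
    if "h \<in> H" "h' \<in> H" for h h' and n n' :: nat
    using that g subgroup.mem_carrier[OF H] by (simp add: nat_pow_mult m_ac add.commute)
  show ?thesis
  proof (rule that)
    show "is_rep (G\<lparr>carrier := H <#> generate G {g}\<rparr>) \<chi>'"
      unfolding is_rep_def set_mult_generate_singleton[OF fin g]
      using \<chi> c0 unfolding is_rep_def
      by (auto simp: \<chi>'_eq mult subgroup.m_closed[OF H] power_add)
    show "\<chi>' h = \<chi> h" if "h \<in> H" for h
      using \<chi>'_eq[OF that, of 0] that subgroup.mem_carrier[OF H] by simp
  qed
qed

lemma is_rep_extend:
  assumes fin: "finite (carrier G)"
  shows "subgroup H G \<Longrightarrow> is_rep (G\<lparr>carrier := H\<rparr>) \<chi> \<Longrightarrow> \<exists>\<tau>. is_rep G \<tau> \<and> (\<forall>h\<in>H. \<tau> h = \<chi> h)"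
proof (induction "card (carrier G - H)" arbitrary: H \<chi> rule: less_induct)
  case less
  show ?case
  proof (cases "H = carrier G")
    case True
    then show ?thesis using less.prems by auto
  next
    case False
    then obtain g where g: "g \<in> carrier G" "g \<notin> H" using subgroup.subset[OF less.prems(1)] by blast
    define K where "K = H <#> generate G {g}"
    have K: "subgroup K G"
      unfolding K_def using less.prems(1) g(1) by (simp add: mult_subgroups generate_is_subgroup)
    have "H \<subseteq> K" "g \<in> K" unfolding K_def set_mult_generate_singleton[OF fin g(1)]
      using g(1) subgroup.mem_carrier[OF less.prems(1)] subgroup.one_closed[OF less.prems(1)]
      by (force intro: exI[of _ "0::nat"], force intro: exI[of _ "1::nat"])
    then have smaller: "card (carrier G - K) < card (carrier G - H)"
      using g fin by (intro psubset_card_mono) auto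
    obtain \<chi>' where \<chi>': "is_rep (G\<lparr>carrier := K\<rparr>) \<chi>'" "\<And>h. h \<in> H \<Longrightarrow> \<chi>' h = \<chi> h"
      using is_rep_extend_adjoin[OF less.prems g(1) fin] unfolding K_def by blast
    obtain \<tau> where "is_rep G \<tau>" "\<forall>h\<in>K. \<tau> h = \<chi>' h" using less.hyps[OF smaller K \<chi>'(1)] by blast
    then show ?thesis using \<chi>'(2) \<open>H \<subseteq> K\<close> by (metis subsetD)
  qed
qed

lemma exists_psi_preimage_if_trivial_on_torsion:
  fixes p :: nat
  assumes fin: "finite (carrier G)" and \<rho>: "is_rep G \<rho>"
    and triv: "\<And>z. z \<in> carrier G \<Longrightarrow> z [^] p = \<one> \<Longrightarrow> \<rho> z = 1"
  shows "\<exists>\<tau>. is_rep G \<tau> \<and> (\<forall>x\<in>carrier G. rep_psi G p \<tau> x = \<rho> x)"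
proof -
  define P where "P = (\<lambda>x. x [^] p) ` carrier G"
  define \<chi> where "\<chi> = \<rho> \<circ> inv_into (carrier G) (\<lambda>x. x [^] p)"
  have "group_hom G G (\<lambda>x. x [^] p)"
    by (intro group_hom.intro group_hom_axioms.intro homI is_group) (simp_all add: nat_pow_distrib)
  then have P: "subgroup P G" unfolding P_def by (rule group_hom.img_is_subgroup)
  have \<rho>_eq: "\<rho> x = \<rho> x'" if x: "x \<in> carrier G" "x' \<in> carrier G" "x [^] p = x' [^] p" for x x'
  proof -
    have "(x \<otimes> inv x') [^] p = \<one>" using x by (simp add: nat_pow_distrib nat_pow_inv)
    then have "\<rho> x * inverse (\<rho> x') = 1"
      using triv x \<rho> is_rep_inv[OF \<rho>] unfolding is_rep_def by (metis inv_closed m_closed)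
    then show ?thesis using \<rho> x(2) unfolding is_rep_def by (simp add: field_simps)
  qed
  have \<chi>_pow: "\<chi> (x [^] p) = \<rho> x" if "x \<in> carrier G" for x
    unfolding \<chi>_def using that by (auto intro!: \<rho>_eq inv_into_into f_inv_into_f[of _ "\<lambda>x. x [^] p"])
  have "is_rep (G\<lparr>carrier := P\<rparr>) \<chi>"
    using \<rho> unfolding is_rep_def P_def by (auto simp: \<chi>_pow nat_pow_distrib[symmetric])
  then obtain \<tau> where "is_rep G \<tau>" "\<forall>y\<in>P. \<tau> y = \<chi> y" using is_rep_extend[OF fin P] by blast
  then show ?thesis unfolding rep_psi_def P_def by (auto simp: \<chi>_pow)
qed

lemma card_fibre_mult_shift:
  assumes \<rho>: "is_rep G \<rho>" and w: "w \<in> carrier G" "w [^] (n::nat) = \<one>"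
  shows "card {x \<in> carrier G. x [^] n = y \<and> \<rho> x = a}
       = card {x \<in> carrier G. x [^] n = y \<and> \<rho> x = a * \<rho> w}"
proof (rule bij_betw_same_card[of "\<lambda>x. x \<otimes> w"], rule bij_betw_byWitness[where f' = "\<lambda>x. x \<otimes> inv w"])
  have "\<rho> w \<noteq> 0" using \<rho> w unfolding is_rep_def by simp
  then show "(\<lambda>x. x \<otimes> w) ` {x \<in> carrier G. x [^] n = y \<and> \<rho> x = a}
      \<subseteq> {x \<in> carrier G. x [^] n = y \<and> \<rho> x = a * \<rho> w}"
    "(\<lambda>x. x \<otimes> inv w) ` {x \<in> carrier G. x [^] n = y \<and> \<rho> x = a * \<rho> w}
      \<subseteq> {x \<in> carrier G. x [^] n = y \<and> \<rho> x = a}"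
    using \<rho> w by (auto simp: nat_pow_distrib nat_pow_inv is_rep_inv is_rep_def)
qed (use w in \<open>auto simp: m_assoc\<close>)

end

lemma (in comm_group) psi_ring_b_elem_eq_0:
  fixes p :: nat
  assumes fin: "finite (carrier G)" and \<rho>: "is_rep G \<rho>"
    and w: "w \<in> carrier G" "w [^] p = \<one>" "\<rho> w = exp (2 * pi * \<i> / of_nat p)"
  shows "psi_ring G p (b_elem G p \<rho>) = (\<lambda>_. 0)"
proof
  fix y
  define F where "F a = {x \<in> carrier G. x [^] p = y \<and> \<rho> x = a}" for a
  have "psi_ring G p (b_elem G p \<rho>) y = (if y \<in> carrier G
      then int (card (F 1)) - int (card (F (exp (2 * pi * \<i> / of_nat p)))) else 0)"
    unfolding psi_ring_def b_elem_def F_def using fin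
    by (simp add: sum_subtractf sum.If_cases Int_def conj_commute conj_left_commute)
  also have "card (F (exp (2 * pi * \<i> / of_nat p))) = card (F 1)"
    unfolding F_def using card_fibre_mult_shift[OF \<rho> w(1,2), of y 1] w(3) by simp
  finally show "psi_ring G p (b_elem G p \<rho>) y = 0" by simp
qed

theorem mainTheorem4:
  fixes G :: "('a, 'b) monoid_scheme" and p e k :: nat and \<rho> :: "'a \<Rightarrow> complex"
  assumes "prime p" and "e \<ge> 1"
    and "comm_group G" and "finite (carrier G)" and "order G = p ^ e"
    and "is_rep G \<rho>" and "rep_level G p \<rho> k" and "k > 0"
    and "\<not> (\<exists>\<tau>. is_rep G \<tau> \<and> (\<forall>x\<in>carrier G. rep_psi G p \<tau> x = \<rho> x))"
  shows "psi_ring G p (b_elem G p \<rho>) = (\<lambda>_. 0)"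
proof -
  interpret comm_group G by fact
  note p = \<open>prime p\<close> and fin = \<open>finite (carrier G)\<close> and \<rho> = \<open>is_rep G \<rho>\<close>
  obtain z where z: "z \<in> carrier G" "z [^]\<^bsub>G\<^esub> p = \<one>\<^bsub>G\<^esub>" "\<rho> z \<noteq> 1"
    using exists_psi_preimage_if_trivial_on_torsion[OF fin \<rho>] assms(9) by blast
  have "\<rho> z ^ p = 1" using is_rep_pow[OF \<rho> z(1), of p] is_rep_one[OF \<rho>] z(2) by simp
  then obtain t where t: "\<rho> z ^ t = exp (2 * pi * \<i> / of_nat p)"
    using prime_root_of_unity_pow_eq[OF p _ z(3)] by blast
  have "z [^]\<^bsub>G\<^esub> t \<in> carrier G" "(z [^]\<^bsub>G\<^esub> t) [^]\<^bsub>G\<^esub> p = \<one>\<^bsub>G\<^esub>"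
    using z by (simp, metis mult.commute nat_pow_one nat_pow_pow)
  moreover have "\<rho> (z [^]\<^bsub>G\<^esub> t) = exp (2 * pi * \<i> / of_nat p)" using is_rep_pow[OF \<rho> z(1)] t by simp
  ultimately show ?thesis using psi_ring_b_elem_eq_0[OF fin \<rho>] by blast
qed

end
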